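(* Fix $n\in\mathbb N$ and positive integers $m_1,m_2$. Let $\mathbf g_{kj}(t)$, $k,j\in\{1,2\}$, $t=1,\dots,n$, be complex random variables i.i.d. with a continuous distribution, $\mathbf G^n_{kj}$ the $n\times n$ diagonal matrix with diagonal entries $\mathbf g_{kj}(1),\dots,\mathbf g_{kj}(n)$, and $\mathbf V^n_1\in\mathbb C^{n\times m_1}$, $\mathbf V^n_2\in\mathbb C^{n\times m_2}$ matrices whose $t$-th rows $\vec{\mathbf v}_1(t)^\top,\vec{\mathbf v}_2(t)^\top$ are deterministic functions of $\mathcal G^{t-1}=\{\mathbf g_{kj}(s):k,j\in\{1,2\},s\le t-1\}$. For $i\in\{1,\dots,n\}$ let $\mathcal A_i$ be the event $\mathrm{rank}[\mathbf G^{i}_{21}\mathbf V^{i}_1\ \ \mathbf G^{i}_{22}\mathbf V^{i}_2]=\mathrm{rank}[\mathbf G^{i-1}_{21}\mathbf V^{i-1}_1\ \ \mathbf G^{i-1}_{22}\mathbf V^{i-1}_2]$, and $\mathcal B_i$ the event that both $[\vec{\mathbf v}_1(i)^\top\ \vec 0_{1\times m_2}]$ and $[\vec 0_{1\times m_1}\ \vec{\mathbf v}_2(i)^\top]$ lie in $\mathrm{rowspan}[\mathbf G^{i-1}_{21}\mathbf V^{i-1}_1\ \ \mathbf G^{i-1}_{22}\mathbf V^{i-1}_2]$. Then $\Pr\big(\bigcup_{i=1}^n(\mathcal A_i\cap\mathcal B_i^c)\big)=0$.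
   Context: For $t\le n$, $\mathbf G^{t}_{kj}$ is the leading $t\times t$ principal submatrix of $\mathbf G^n_{kj}$ and $\mathbf V^{t}_j$ consists of the first $t$ rows of $\mathbf V^n_j$; for $t=0$ the matrix $[\mathbf G^0_{21}\mathbf V^0_1\ \ \mathbf G^0_{22}\mathbf V^0_2]$ is the zero row (rank 0, rowspan $\{0\}$). *)

theory Defs
  imports "HOL-Probability.Probability" "Jordan_Normal_Form.DL_Rank"
begin

text \<open>Indices: k, j range over {1,2}; times t over {1..n}. The random variable
  g k j t is the scalar g_kj(t). Matrices use 0-based row indices, so row a
  of a t-row matrix corresponds to time a+1.\<close>

definition Gmat :: "(nat \<Rightarrow> nat \<Rightarrow> nat \<Rightarrow> 'w \<Rightarrow> complex) \<Rightarrow> nat \<Rightarrow> nat \<Rightarrow> nat \<Rightarrow> 'w \<Rightarrow> complex mat" where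
  "Gmat g k j t \<omega> = mat_diag t (\<lambda>a. g k j (a + 1) \<omega>)"

definition Vmat :: "(nat \<Rightarrow> 'w \<Rightarrow> nat \<Rightarrow> complex) \<Rightarrow> nat \<Rightarrow> nat \<Rightarrow> 'w \<Rightarrow> complex mat" where
  "Vmat v m t \<omega> = Matrix.mat t m (\<lambda>(a, c). v (a + 1) \<omega> c)"

text \<open>The block matrix [G^t_21 V^t_1  G^t_22 V^t_2] (t x (m1+m2)); for t = 0 it has no rows.\<close>
definition Mmat :: "(nat \<Rightarrow> nat \<Rightarrow> nat \<Rightarrow> 'w \<Rightarrow> complex) \<Rightarrow> (nat \<Rightarrow> 'w \<Rightarrow> nat \<Rightarrow> complex) \<Rightarrow>
    (nat \<Rightarrow> 'w \<Rightarrow> nat \<Rightarrow> complex) \<Rightarrow> nat \<Rightarrow> nat \<Rightarrow> nat \<Rightarrow> 'w \<Rightarrow> complex mat" where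
  "Mmat g v1 v2 m1 m2 t \<omega> =
     four_block_mat (Gmat g 2 1 t \<omega> * Vmat v1 m1 t \<omega>) (Gmat g 2 2 t \<omega> * Vmat v2 m2 t \<omega>)
                    (0\<^sub>m 0 m1) (0\<^sub>m 0 m2)"

definition crank :: "complex mat \<Rightarrow> nat" where
  "crank A = vec_space.rank (dim_row A) A"

definition crowspan :: "complex mat \<Rightarrow> complex vec set" where
  "crowspan A = vec_space.row_space (dim_col A) A"

definition past :: "nat \<Rightarrow> (nat \<times> nat \<times> nat) set" where
  "past t = {1,2} \<times> {1,2} \<times> {1..<t}"

end

theory Submission
  imports Defs
begin

text \<open>
  The new row of the block matrix is g_21(i) a + g_22(i) b with a = [v_1(i) 0] and
  b = [0 v_2(i)]. If the rank does not grow, this row lies in the span of the old rows; if moreover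
  a or b lies outside that span, taking Gram--Schmidt residuals r_a, r_b against the old rows gives
  g_21(i) r_a + g_22(i) r_b = 0. Hence g_22(i) = 0 or g_21(i) = - g_22(i) r_b(c) / r_a(c) for some
  coordinate c. The residuals are explicit, hence measurable, functions of the gains before time i
  and of the causally chosen rows, so the right-hand sides are independent of g_21(i); as the
  gains have no atoms, each of these finitely many events is null.
\<close>

text \<open>Vectors of C^m are represented by functions nat \<Rightarrow> complex of which only the first m values
  matter; this keeps Gram--Schmidt, and its measurability in the data, elementary.\<close>

definition cinner :: "nat \<Rightarrow> (nat \<Rightarrow> complex) \<Rightarrow> (nat \<Rightarrow> complex) \<Rightarrow> complex" where
  "cinner m u w = (\<Sum>c<m. u c * cnj (w c))"

lemma cinner_commute: "cinner m w u = cnj (cinner m u w)"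
  by (simp add: cinner_def mult.commute)

lemma cinner_cong:
  "(\<And>c. c < m \<Longrightarrow> u c = u' c) \<Longrightarrow> (\<And>c. c < m \<Longrightarrow> w c = w' c) \<Longrightarrow> cinner m u w = cinner m u' w'"
  unfolding cinner_def by (intro sum.cong) auto

lemma cinner_diff_left: "cinner m (\<lambda>c. u c - v c) w = cinner m u w - cinner m v w"
  by (simp add: cinner_def left_diff_distrib sum_subtractf)

lemma cinner_add_left: "cinner m (\<lambda>c. u c + v c) w = cinner m u w + cinner m v w"
  by (simp add: cinner_def distrib_right sum.distrib)

lemma cinner_scale_left: "cinner m (\<lambda>c. a * u c) w = a * cinner m u w"
  by (simp add: cinner_def sum_distrib_left mult.assoc)

lemma cinner_sum_left: "cinner m (\<lambda>c. \<Sum>i\<in>I. f i c) w = (\<Sum>i\<in>I. cinner m (f i) w)"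
  unfolding cinner_def sum_distrib_right by (rule sum.swap)

lemma cinner_diff_right: "cinner m w (\<lambda>c. u c - v c) = cinner m w u - cinner m w v"
  by (metis (no_types) cinner_commute cinner_diff_left complex_cnj_diff)

lemma cinner_add_right: "cinner m w (\<lambda>c. u c + v c) = cinner m w u + cinner m w v"
  by (metis (no_types) cinner_commute cinner_add_left complex_cnj_add)

lemma cinner_scale_right: "cinner m w (\<lambda>c. a * u c) = cnj a * cinner m w u"
  by (metis (no_types) cinner_commute cinner_scale_left complex_cnj_mult)

lemma cinner_sum_right: "cinner m w (\<lambda>c. \<Sum>i\<in>I. f i c) = (\<Sum>i\<in>I. cinner m w (f i))"
  unfolding cinner_def cnj_sum sum_distrib_left by (rule sum.swap)

lemmas cinner_linear =
  cinner_diff_left cinner_add_left cinner_scale_left cinner_sum_left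
  cinner_diff_right cinner_add_right cinner_scale_right cinner_sum_right

lemma cinner_self_eq_0D:
  assumes "cinner m u u = 0" and "c < m"
  shows "u c = 0"
proof -
  have "cinner m u u = of_real (\<Sum>c<m. (cmod (u c))\<^sup>2)"
    unfolding cinner_def of_real_sum by (intro sum.cong refl) (simp only: complex_norm_square)
  then have "(\<Sum>c<m. (cmod (u c))\<^sup>2) = 0"
    using assms(1) by (metis of_real_eq_0_iff)
  then show ?thesis
    using assms(2) by (simp add: sum_nonneg_eq_0_iff)
qed

text \<open>Gram--Schmidt orthogonalisation of the rows R 0, R 1, ... The coefficient of a projection
  onto a zero vector is taken to be 0, so linearly dependent rows are allowed.\<close>

definition gs_coeff :: "nat \<Rightarrow> (nat \<Rightarrow> complex) \<Rightarrow> (nat \<Rightarrow> complex) \<Rightarrow> complex" where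
  "gs_coeff m u e = (if cinner m e e = 0 then 0 else cinner m u e / cinner m e e)"

function gs_ortho :: "nat \<Rightarrow> (nat \<Rightarrow> nat \<Rightarrow> complex) \<Rightarrow> nat \<Rightarrow> nat \<Rightarrow> complex" where
  "gs_ortho m R j c = R j c - (\<Sum>i<j. gs_coeff m (R j) (gs_ortho m R i) * gs_ortho m R i c)"
  by pat_completeness auto
termination by (relation "Wellfounded.measure (\<lambda>(m, R, j, c). j)") auto

declare gs_ortho.simps [simp del]

definition gs_residual :: "nat \<Rightarrow> (nat \<Rightarrow> nat \<Rightarrow> complex) \<Rightarrow> nat \<Rightarrow> (nat \<Rightarrow> complex) \<Rightarrow> nat \<Rightarrow> complex" where
  "gs_residual m R k u c = u c - (\<Sum>i<k. gs_coeff m u (gs_ortho m R i) * gs_ortho m R i c)"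

definition in_row_span :: "nat \<Rightarrow> (nat \<Rightarrow> nat \<Rightarrow> complex) \<Rightarrow> nat \<Rightarrow> (nat \<Rightarrow> complex) \<Rightarrow> bool" where
  "in_row_span k R m u \<longleftrightarrow> (\<exists>y. \<forall>c<m. u c = (\<Sum>l<k. y l * R l c))"

lemma gs_coeff_cong:
  "(\<And>c. c < m \<Longrightarrow> u c = u' c) \<Longrightarrow> (\<And>c. c < m \<Longrightarrow> e c = e' c) \<Longrightarrow> gs_coeff m u e = gs_coeff m u' e'"
  unfolding gs_coeff_def by (simp cong: cinner_cong)

lemma gs_ortho_eq_residual: "gs_ortho m R j = gs_residual m R j (R j)"
  by (rule ext, subst gs_ortho.simps) (simp add: gs_residual_def)

lemma gs_coeff_mult_cinner: "gs_coeff m u e * cinner m e e = cinner m u e"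
proof (cases "cinner m e e = 0")
  case True
  then have "\<forall>c<m. e c = 0"
    by (blast intro: cinner_self_eq_0D)
  then have "cinner m u e = 0"
    by (simp add: cinner_def)
  with True show ?thesis by (simp add: gs_coeff_def)
qed (simp add: gs_coeff_def)

lemma cinner_gs_residual_orthoI:
  assumes orth: "\<And>i i'. i < k \<Longrightarrow> i' < k \<Longrightarrow> i \<noteq> i' \<Longrightarrow> cinner m (gs_ortho m R i') (gs_ortho m R i) = 0"
    and "i < k"
  shows "cinner m (gs_residual m R k u) (gs_ortho m R i) = 0"
proof -
  have "(\<Sum>i'<k. gs_coeff m u (gs_ortho m R i') * cinner m (gs_ortho m R i') (gs_ortho m R i))
      = (\<Sum>i'<k. if i' = i then cinner m u (gs_ortho m R i) else 0)"
    using orth \<open>i < k\<close> by (intro sum.cong) (auto simp: gs_coeff_mult_cinner)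
  then show ?thesis
    using \<open>i < k\<close> by (simp add: gs_residual_def[abs_def] cinner_linear)
qed

lemma gs_ortho_orthogonal: "i < j \<Longrightarrow> cinner m (gs_ortho m R j) (gs_ortho m R i) = 0"
proof (induction j arbitrary: i rule: less_induct)
  case (less j)
  have "cinner m (gs_ortho m R i') (gs_ortho m R i) = 0"
    if "i < j" "i' < j" "i \<noteq> i'" for i i'
  proof (cases "i < i'")
    case True
    then show ?thesis using less.IH that by blast
  next
    case False
    then have "cinner m (gs_ortho m R i) (gs_ortho m R i') = 0"
      using less.IH that by simp
    then show ?thesis by (subst cinner_commute) simp
  qed
  then show ?case
    unfolding gs_ortho_eq_residual[of m R j] using cinner_gs_residual_orthoI less.prems by blast
qed

lemma cinner_gs_residual_ortho: "i < k \<Longrightarrow> cinner m (gs_residual m R k u) (gs_ortho m R i) = 0"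
  by (rule cinner_gs_residual_orthoI)
    (metis cinner_commute complex_cnj_zero gs_ortho_orthogonal nat_neq_iff)

lemma cinner_gs_residual_row: "l < k \<Longrightarrow> cinner m (gs_residual m R k u) (R l) = 0"
proof -
  assume "l < k"
  have "R l = (\<lambda>c. gs_ortho m R l c + (\<Sum>i<l. gs_coeff m (R l) (gs_ortho m R i) * gs_ortho m R i c))"
    by (rule ext) (simp add: gs_ortho.simps[of m R l])
  then have "cinner m (gs_residual m R k u) (R l) = cinner m (gs_residual m R k u)
      (\<lambda>c. gs_ortho m R l c + (\<Sum>i<l. gs_coeff m (R l) (gs_ortho m R i) * gs_ortho m R i c))"
    by (rule arg_cong)
  then show ?thesis
    using \<open>l < k\<close> by (simp add: cinner_linear cinner_gs_residual_ortho)
qed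

lemma cinner_gs_residual_self:
  "cinner m (gs_residual m R k u) (gs_residual m R k u) = cinner m (gs_residual m R k u) u"
  by (subst (2) gs_residual_def[abs_def]) (simp add: cinner_linear cinner_gs_residual_ortho)


lemma in_row_span_row: "l < k \<Longrightarrow> in_row_span k R m (R l)"
proof -
  assume "l < k"
  then have "(\<Sum>l'<k. of_bool (l' = l) * R l' c) = R l c" for c
    by (simp add: sum.delta)
  then show ?thesis
    unfolding in_row_span_def by metis
qed

lemma in_row_span_diff:
  assumes "in_row_span k R m u" and "in_row_span k R m w"
  shows "in_row_span k R m (\<lambda>c. u c - w c)"
proof -
  obtain y where y: "\<forall>c<m. u c = (\<Sum>l<k. y l * R l c)"
    using assms(1) unfolding in_row_span_def ..
  obtain z where z: "\<forall>c<m. w c = (\<Sum>l<k. z l * R l c)"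
    using assms(2) unfolding in_row_span_def ..
  have "\<forall>c<m. u c - w c = (\<Sum>l<k. (y l - z l) * R l c)"
    using y z by (simp add: left_diff_distrib sum_subtractf)
  then show ?thesis
    unfolding in_row_span_def by (rule exI[of _ "\<lambda>l. y l - z l"])
qed

lemma in_row_span_sum:
  assumes "\<And>i. i \<in> I \<Longrightarrow> in_row_span k R m (f i)"
  shows "in_row_span k R m (\<lambda>c. \<Sum>i\<in>I. a i * f i c)"
proof -
  have "\<forall>i\<in>I. \<exists>y. \<forall>c<m. f i c = (\<Sum>l<k. y l * R l c)"
    using assms unfolding in_row_span_def by blast
  from bchoice[OF this] obtain Y where Y: "\<forall>i\<in>I. \<forall>c<m. f i c = (\<Sum>l<k. Y i l * R l c)"
    by blast
  have "(\<Sum>i\<in>I. a i * f i c) = (\<Sum>l<k. (\<Sum>i\<in>I. a i * Y i l) * R l c)" if "c < m" for c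
  proof -
    have "(\<Sum>i\<in>I. a i * f i c) = (\<Sum>i\<in>I. \<Sum>l<k. a i * Y i l * R l c)"
      using Y that by (simp add: sum_distrib_left mult.assoc)
    also have "\<dots> = (\<Sum>l<k. (\<Sum>i\<in>I. a i * Y i l) * R l c)"
      by (subst sum.swap) (simp add: sum_distrib_right)
    finally show ?thesis .
  qed
  then show ?thesis
    unfolding in_row_span_def by (intro exI[of _ "\<lambda>l. \<Sum>i\<in>I. a i * Y i l"] allI impI)
qed

lemma gs_ortho_in_row_span: "j < k \<Longrightarrow> in_row_span k R m (gs_ortho m R j)"
proof (induction j rule: less_induct)
  case (less j)
  have "gs_ortho m R j = (\<lambda>c. R j c - (\<Sum>i<j. gs_coeff m (R j) (gs_ortho m R i) * gs_ortho m R i c))"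
    by (rule ext) (rule gs_ortho.simps)
  then show ?case
    using less by (auto intro!: in_row_span_diff in_row_span_row in_row_span_sum)
qed

lemma gs_residual_eq_0_iff: "(\<forall>c<m. gs_residual m R k u c = 0) \<longleftrightarrow> in_row_span k R m u"
proof
  assume res0: "\<forall>c<m. gs_residual m R k u c = 0"
  have "in_row_span k R m (\<lambda>c. \<Sum>i<k. gs_coeff m u (gs_ortho m R i) * gs_ortho m R i c)"
    by (intro in_row_span_sum gs_ortho_in_row_span) simp
  moreover have "u c = (\<Sum>i<k. gs_coeff m u (gs_ortho m R i) * gs_ortho m R i c)" if "c < m" for c
    using res0 that unfolding gs_residual_def by simp
  ultimately show "in_row_span k R m u"
    unfolding in_row_span_def by simp
next
  assume "in_row_span k R m u"
  then obtain y where y: "\<And>c. c < m \<Longrightarrow> u c = (\<Sum>l<k. y l * R l c)"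
    unfolding in_row_span_def by blast
  let ?r = "gs_residual m R k u"
  have "cinner m ?r ?r = cinner m ?r (\<lambda>c. \<Sum>l<k. y l * R l c)"
    unfolding cinner_gs_residual_self using y by (intro cinner_cong) simp_all
  also have "\<dots> = 0"
    by (simp add: cinner_linear cinner_gs_residual_row)
  finally show "\<forall>c<m. ?r c = 0"
    using cinner_self_eq_0D by blast
qed

text \<open>A vector outside the row span is separated from the rows by a linear functional; the
  normalised conjugate of its Gram--Schmidt residual is such a functional.\<close>

lemma separating_functional:
  assumes "\<not> in_row_span k R m u"
  shows "\<exists>x. (\<forall>l<k. (\<Sum>c<m. R l c * x c) = 0) \<and> (\<Sum>c<m. u c * x c) = 1"
proof -
  let ?r = "gs_residual m R k u"
  have nz: "cinner m ?r ?r \<noteq> 0"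
    using assms gs_residual_eq_0_iff cinner_self_eq_0D by blast
  define x where "x c = cnj (?r c) / cinner m ?r ?r" for c
  have x: "(\<Sum>c<m. w c * x c) = cinner m w ?r / cinner m ?r ?r" for w
    unfolding x_def by (simp add: cinner_def sum_divide_distrib)
  have "cinner m (R l) ?r = 0" if "l < k" for l
    using cinner_gs_residual_row[OF that] by (subst cinner_commute) simp
  moreover have "cinner m u ?r = cinner m ?r ?r"
    by (metis cinner_commute cinner_gs_residual_self)
  ultimately show ?thesis
    using nz by (intro exI[of _ x]) (simp add: x)
qed

lemma gs_residual_lincomb:
  "gs_residual m R k (\<lambda>c. a * u c + b * w c) c = a * gs_residual m R k u c + b * gs_residual m R k w c"
proof -
  have "gs_coeff m (\<lambda>c. a * u c + b * w c) e = a * gs_coeff m u e + b * gs_coeff m w e" for e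
    by (simp add: gs_coeff_def cinner_linear add_divide_distrib)
  then show ?thesis
    by (simp add: gs_residual_def algebra_simps sum.distrib sum_distrib_left)
qed

lemma gs_ortho_cong:
  assumes "\<And>l c. l < k \<Longrightarrow> c < m \<Longrightarrow> R l c = R' l c"
  shows "j < k \<Longrightarrow> c < m \<Longrightarrow> gs_ortho m R j c = gs_ortho m R' j c"
proof (induction j arbitrary: c rule: less_induct)
  case (less j)
  have "gs_coeff m (R j) (gs_ortho m R i) = gs_coeff m (R' j) (gs_ortho m R' i)" if "i < j" for i
    using less assms that by (intro gs_coeff_cong) auto
  with less assms show ?case
    by (simp add: gs_ortho.simps[of m R j] gs_ortho.simps[of m R' j])
qed

lemma gs_residual_cong:
  assumes R: "\<And>l c. l < k \<Longrightarrow> c < m \<Longrightarrow> R l c = R' l c" and u: "\<And>c. c < m \<Longrightarrow> u c = u' c"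
    and "c < m"
  shows "gs_residual m R k u c = gs_residual m R' k u' c"
proof -
  have "gs_coeff m u (gs_ortho m R i) = gs_coeff m u' (gs_ortho m R' i)" if "i < k" for i
    using u gs_ortho_cong[OF R that] by (intro gs_coeff_cong) auto
  then show ?thesis
    using u \<open>c < m\<close> gs_ortho_cong[OF R] unfolding gs_residual_def by simp
qed

lemma in_row_span_lincombD:
  assumes span: "in_row_span k R m (\<lambda>c. x1 * a c + x2 * b c)"
    and not_both: "\<not> (in_row_span k R m a \<and> in_row_span k R m b)"
  shows "x2 = 0 \<or> (\<exists>c<m. x1 = - x2 * gs_residual m R k b c / gs_residual m R k a c)"
proof -
  have res: "x1 * gs_residual m R k a c + x2 * gs_residual m R k b c = 0" if "c < m" for c
    using span that unfolding gs_residual_eq_0_iff[symmetric] gs_residual_lincomb by blast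
  show ?thesis
  proof (cases "\<exists>c<m. gs_residual m R k a c \<noteq> 0")
    case True
    then obtain c where "c < m" "gs_residual m R k a c \<noteq> 0" by blast
    with res[of c] show ?thesis
      by (auto simp: field_simps eq_neg_iff_add_eq_0)
  next
    case False
    then have "\<not> in_row_span k R m b"
      using not_both gs_residual_eq_0_iff by blast
    then obtain c where "c < m" "gs_residual m R k b c \<noteq> 0"
      using gs_residual_eq_0_iff by blast
    with res[of c] False show ?thesis by auto
  qed
qed

lemma (in vec_space) lift_lincomb_eq_0:
  assumes "finite S" and "S \<subseteq> carrier_vec n" and "lin_indpt S"
    and lift: "\<And>s i. s \<in> S \<Longrightarrow> i < n \<Longrightarrow> L s $ i = s $ i"
    and comb: "\<And>i. i < n \<Longrightarrow> (\<Sum>s\<in>S. d s * L s $ i) = 0"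
  shows "\<forall>s\<in>S. d s = 0"
proof -
  have "lincomb d S = 0\<^sub>v n"
  proof (rule eq_vecI)
    fix i assume "i < dim_vec (0\<^sub>v n :: 'a vec)"
    then have "i < n" by simp
    then have "lincomb d S $ i = (\<Sum>s\<in>S. d s * L s $ i)"
      using assms(2) lift by (simp add: lincomb_index)
    with comb \<open>i < n\<close> show "lincomb d S $ i = 0\<^sub>v n $ i" by simp
  qed (use assms(1,2) lincomb_dim in simp)
  then show ?thesis
    using assms(1,3) unfolding lin_dep_def by (metis subset_refl)
qed

lemma (in vec_space) lift_indpt_columns:
  assumes A: "A \<in> carrier_mat (Suc n) m" and B: "B \<in> carrier_mat n m"
    and AB: "\<And>l c. l < n \<Longrightarrow> c < m \<Longrightarrow> A $$ (l, c) = B $$ (l, c)"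
  obtains S L where "card S = rank B" and "finite S" and "S \<subseteq> carrier_vec n" and "lin_indpt S"
    and "inj_on L S" and "L ` S \<subseteq> set (cols A)" and "\<And>s i. s \<in> S \<Longrightarrow> i < n \<Longrightarrow> L s $ i = s $ i"
proof -
  obtain S where maxS: "maximal S (\<lambda>T. T \<subseteq> set (cols B) \<and> lin_indpt T)"
    using maximal_exists[of "\<lambda>T. T \<subseteq> set (cols B) \<and> lin_indpt T" "card (set (cols B))" "{}"]
    by (meson List.finite_set card_mono empty_iff empty_subsetI finite_lin_indpt2 rev_finite_subset)
  then have SB: "S \<subseteq> set (cols B)" and S_indpt: "lin_indpt S"
    unfolding maximal_def by auto
  have S_carrier: "S \<subseteq> carrier_vec n"
    using SB B by (auto simp: cols_def)
  have "\<forall>s\<in>S. \<exists>j. j < m \<and> col B j = s"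
    using SB B by (force simp: cols_def)
  then obtain J where J: "\<And>s. s \<in> S \<Longrightarrow> J s < m \<and> col B (J s) = s"
    by metis
  define L where "L s = col A (J s)" for s
  have lift: "L s $ i = s $ i" if "s \<in> S" "i < n" for s i
  proof -
    have "L s $ i = A $$ (i, J s)"
      using J[OF that(1)] that(2) A unfolding L_def by simp
    also have "\<dots> = B $$ (i, J s)"
      using J[OF that(1)] that(2) AB by simp
    also have "\<dots> = col B (J s) $ i"
      by (intro index_col[symmetric]) (use J[OF that(1)] that(2) B in auto)
    finally show ?thesis
      using J[OF that(1)] by simp
  qed
  have inj: "inj_on L S"
  proof (rule inj_onI)
    fix s s' assume "s \<in> S" "s' \<in> S" "L s = L s'"
    then show "s = s'"
      using S_carrier lift by (metis (no_types, lifting) carrier_vecD eq_vecI subsetD)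
  qed
  have LA: "L ` S \<subseteq> set (cols A)"
    unfolding L_def using J A by (auto simp: cols_def)
  show ?thesis
    by (rule that[OF rank_card_indpt[OF B maxS, symmetric] finite_subset[OF SB List.finite_set]
          S_carrier S_indpt inj LA lift])
qed

lemma (in vec_space) col_notin_span_of_unit_image:
  assumes A: "A \<in> carrier_mat n m" and finT: "finite T" and T: "T \<subseteq> carrier_vec n" and "p < n"
    and vanish: "\<And>d. (\<And>i. i < n \<Longrightarrow> i \<noteq> p \<Longrightarrow> (\<Sum>t\<in>T. d t * t $ i) = 0) \<Longrightarrow> (\<Sum>t\<in>T. d t * t $ p) = 0"
    and x0: "\<And>i. i < n \<Longrightarrow> i \<noteq> p \<Longrightarrow> (\<Sum>c<m. A $$ (i, c) * x c) = 0"
    and x1: "(\<Sum>c<m. A $$ (p, c) * x c) = 1"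
  shows "\<exists>j<m. col A j \<notin> span T"
proof (rule ccontr)
  assume "\<not> (\<exists>j<m. col A j \<notin> span T)"
  then have "\<forall>j. \<exists>a. j < m \<longrightarrow> lincomb a T = col A j"
    using finite_in_span[OF finT T] by metis
  then obtain C where C: "\<And>j. j < m \<Longrightarrow> lincomb (C j) T = col A j"
    by metis
  have A_entry: "A $$ (i, c) = (\<Sum>t\<in>T. C c t * t $ i)" if "i < n" "c < m" for i c
  proof -
    have "A $$ (i, c) = lincomb (C c) T $ i"
      using A that C by simp
    then show ?thesis
      by (simp add: lincomb_index[OF that(1) T])
  qed
  define d where "d t = (\<Sum>c<m. x c * C c t)" for t
  have Ax: "(\<Sum>t\<in>T. d t * t $ i) = (\<Sum>c<m. A $$ (i, c) * x c)" if "i < n" for i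
  proof -
    have "(\<Sum>t\<in>T. d t * t $ i) = (\<Sum>c<m. \<Sum>t\<in>T. x c * (C c t * t $ i))"
      unfolding d_def sum_distrib_right by (subst sum.swap) (simp add: mult.assoc)
    also have "\<dots> = (\<Sum>c<m. A $$ (i, c) * x c)"
      using that by (intro sum.cong refl) (simp add: A_entry sum_distrib_left mult.commute)
    finally show ?thesis .
  qed
  have "(\<Sum>t\<in>T. d t * t $ p) = 0"
    using Ax x0 by (intro vanish) simp
  with Ax[OF \<open>p < n\<close>] x1 show False by simp
qed

text \<open>A maximal independent set of columns of B lifts to an independent set of columns of A,
  and by the functional x some column of A lies outside its span.\<close>

lemma rank_less_of_separating_functional:
  fixes A B :: "'a :: field mat"
  assumes A: "A \<in> carrier_mat (Suc k) m" and B: "B \<in> carrier_mat k m"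
    and AB: "\<And>l c. l < k \<Longrightarrow> c < m \<Longrightarrow> A $$ (l, c) = B $$ (l, c)"
    and x0: "\<And>l. l < k \<Longrightarrow> (\<Sum>c<m. B $$ (l, c) * x c) = 0"
    and x1: "(\<Sum>c<m. A $$ (k, c) * x c) = 1"
  shows "vec_space.rank k B < vec_space.rank (Suc k) A"
proof -
  interpret VA: vec_space "TYPE('a)" "Suc k" .
  interpret VB: vec_space "TYPE('a)" k .
  obtain S L where rankB: "card S = VB.rank B" and finS: "finite S" and S: "S \<subseteq> carrier_vec k"
    and S_indpt: "VB.lin_indpt S" and inj: "inj_on L S" and TA: "L ` S \<subseteq> set (cols A)"
    and lift: "\<And>s i. s \<in> S \<Longrightarrow> i < k \<Longrightarrow> L s $ i = s $ i"
    using VB.lift_indpt_columns[OF A B AB] by blast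
  define T where "T = L ` S"
  have finT: "finite T"
    unfolding T_def using finS by simp
  have T_carrier: "T \<subseteq> carrier_vec (Suc k)"
    using TA A unfolding T_def by (auto simp: cols_def)
  have sum_T: "(\<Sum>t\<in>T. d t * t $ i) = (\<Sum>s\<in>S. d (L s) * L s $ i)" for d i
    unfolding T_def by (rule sum.reindex_cong[OF inj refl refl])
  have lift_zero: "\<forall>t\<in>T. d t = 0" if "\<And>i. i < k \<Longrightarrow> (\<Sum>t\<in>T. d t * t $ i) = 0" for d
  proof -
    have "\<forall>s\<in>S. d (L s) = 0"
      using VB.lift_lincomb_eq_0[OF finS S S_indpt lift, of "\<lambda>s. d (L s)"] that
      unfolding sum_T by blast
    then show ?thesis
      unfolding T_def by simp
  qed
  have T_indpt: "VA.lin_indpt T"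
  proof (rule VA.finite_lin_indpt2[OF finT T_carrier])
    fix a assume lc: "VA.lincomb a T = 0\<^sub>v (Suc k)"
    have "(\<Sum>t\<in>T. a t * t $ i) = 0" if "i < k" for i
    proof -
      have "i < Suc k"
        using that by simp
      then have "(\<Sum>t\<in>T. a t * t $ i) = VA.lincomb a T $ i"
        by (rule VA.lincomb_index[OF _ T_carrier, symmetric])
      with lc \<open>i < Suc k\<close> show ?thesis by simp
    qed
    then show "\<forall>t\<in>T. a t = 0"
      by (rule lift_zero)
  qed
  have "\<exists>j<m. col A j \<notin> VA.span T"
  proof (rule VA.col_notin_span_of_unit_image[OF A finT T_carrier, of k x])
    show "(\<Sum>t\<in>T. d t * t $ k) = 0"
      if "\<And>i. i < Suc k \<Longrightarrow> i \<noteq> k \<Longrightarrow> (\<Sum>t\<in>T. d t * t $ i) = 0" for d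
      using lift_zero[of d] that by simp
    show "(\<Sum>c<m. A $$ (i, c) * x c) = 0" if "i < Suc k" "i \<noteq> k" for i
      using that AB x0[of i] by simp
  qed (simp_all add: x1)
  then obtain j where j: "j < m" "col A j \<notin> VA.span T"
    by blast
  have "col A j \<notin> T"
    using j VA.in_own_span[OF T_carrier] by blast
  have "card (insert (col A j) T) \<le> VA.rank A"
  proof (rule VA.rank_ge_card_indpt[OF A])
    show "insert (col A j) T \<subseteq> set (cols A)"
      using TA A j unfolding T_def by (auto simp: cols_def)
    show "VA.lin_indpt (insert (col A j) T)"
      using VA.lin_dep_iff_in_span[OF T_carrier T_indpt _ \<open>col A j \<notin> T\<close>] A j by simp
  qed
  moreover have "card (insert (col A j) T) = Suc (card S)"
    using \<open>col A j \<notin> T\<close> finT card_image[OF inj] unfolding T_def by simp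
  ultimately show ?thesis
    using rankB by simp
qed

lemma last_row_in_row_span_of_rank_eq:
  fixes A B :: "complex mat"
  assumes A: "A \<in> carrier_mat (Suc k) m" and B: "B \<in> carrier_mat k m"
    and AB: "\<And>l c. l < k \<Longrightarrow> c < m \<Longrightarrow> A $$ (l, c) = B $$ (l, c)"
    and rank: "crank A = crank B"
  shows "in_row_span k (\<lambda>l c. B $$ (l, c)) m (\<lambda>c. A $$ (k, c))"
proof (rule ccontr)
  assume "\<not> ?thesis"
  then obtain x where "\<forall>l<k. (\<Sum>c<m. B $$ (l, c) * x c) = 0" "(\<Sum>c<m. A $$ (k, c) * x c) = 1"
    using separating_functional by blast
  then have "vec_space.rank k B < vec_space.rank (Suc k) A"
    using rank_less_of_separating_functional[OF A B AB] by blast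
  with rank A B show False
    unfolding crank_def by simp
qed

lemma crowspan_of_in_row_span:
  fixes B :: "complex mat"
  assumes B: "B \<in> carrier_mat k m" and w: "w \<in> carrier_vec m"
    and span: "in_row_span k (\<lambda>l c. B $$ (l, c)) m (\<lambda>c. w $ c)"
  shows "w \<in> crowspan B"
proof -
  obtain y where y: "\<forall>c<m. w $ c = (\<Sum>l<k. y l * B $$ (l, c))"
    using span unfolding in_row_span_def by blast
  have "B\<^sup>T *\<^sub>v vec k y = w"
  proof (rule eq_vecI)
    fix c assume "c < dim_vec w"
    with w y B show "(B\<^sup>T *\<^sub>v vec k y) $ c = w $ c"
      by (simp add: scalar_prod_def lessThan_atLeast0 mult.commute)
  qed (use B w in simp)
  then show ?thesis
    unfolding crowspan_def using vec_space.row_space_eq[OF B] B w by auto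
qed

lemma mat_diag_mult_mat: "mat_diag t f * Matrix.mat t m h = Matrix.mat t m (\<lambda>(i, j). f i * h (i, j))"
  by (rule eq_matI) (auto simp: mat_diag_mult_left[of _ t m])

lemma Mmat_carrier: "Mmat g v1 v2 m1 m2 t \<omega> \<in> carrier_mat t (m1 + m2)"
  unfolding Mmat_def Gmat_def Vmat_def carrier_mat_def by (simp add: mat_diag_mult_mat)

lemma Mmat_index:
  "l < t \<Longrightarrow> c < m1 + m2 \<Longrightarrow> Mmat g v1 v2 m1 m2 t \<omega> $$ (l, c) =
     (if c < m1 then g 2 1 (l + 1) \<omega> * v1 (l + 1) \<omega> c else g 2 2 (l + 1) \<omega> * v2 (l + 1) \<omega> (c - m1))"
  unfolding Mmat_def Gmat_def Vmat_def by (simp add: mat_diag_mult_mat)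

definition forced_gain :: "(nat \<Rightarrow> nat \<Rightarrow> nat \<Rightarrow> 'w \<Rightarrow> complex) \<Rightarrow> (nat \<Rightarrow> 'w \<Rightarrow> nat \<Rightarrow> complex) \<Rightarrow>
    (nat \<Rightarrow> 'w \<Rightarrow> nat \<Rightarrow> complex) \<Rightarrow> nat \<Rightarrow> nat \<Rightarrow> nat \<Rightarrow> 'w \<Rightarrow> nat \<Rightarrow> complex" where
  "forced_gain g v1 v2 m1 m2 i \<omega> c = - g 2 2 i \<omega> *
     gs_residual (m1 + m2) (\<lambda>l c. Mmat g v1 v2 m1 m2 (i - 1) \<omega> $$ (l, c)) (i - 1)
       (\<lambda>c. (0\<^sub>v m1 @\<^sub>v Matrix.vec m2 (v2 i \<omega>)) $ c) c /
     gs_residual (m1 + m2) (\<lambda>l c. Mmat g v1 v2 m1 m2 (i - 1) \<omega> $$ (l, c)) (i - 1)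
       (\<lambda>c. (Matrix.vec m1 (v1 i \<omega>) @\<^sub>v 0\<^sub>v m2) $ c) c"

lemma Mmat_rank_eq_cases:
  fixes g :: "nat \<Rightarrow> nat \<Rightarrow> nat \<Rightarrow> 'w \<Rightarrow> complex" and v1 v2 :: "nat \<Rightarrow> 'w \<Rightarrow> nat \<Rightarrow> complex"
    and m1 m2 i :: nat and \<omega> :: 'w
  defines "M t \<equiv> Mmat g v1 v2 m1 m2 t \<omega>"
    and "a \<equiv> Matrix.vec m1 (v1 i \<omega>) @\<^sub>v 0\<^sub>v m2"
    and "b \<equiv> 0\<^sub>v m1 @\<^sub>v Matrix.vec m2 (v2 i \<omega>)"
  assumes "1 \<le> i"
    and rank: "crank (M i) = crank (M (i - 1))"
    and not_both: "\<not> (a \<in> crowspan (M (i - 1)) \<and> b \<in> crowspan (M (i - 1)))"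
  shows "g 2 2 i \<omega> = 0 \<or> (\<exists>c<m1 + m2. g 2 1 i \<omega> = forced_gain g v1 v2 m1 m2 i \<omega> c)"
proof -
  define k where "k = i - 1"
  have i: "i = Suc k" using \<open>1 \<le> i\<close> unfolding k_def by simp
  let ?R = "\<lambda>l c. M k $$ (l, c)"
  have "in_row_span k ?R (m1 + m2) (\<lambda>c. M (Suc k) $$ (k, c))"
    using rank unfolding i k_def[symmetric] M_def
    by (intro last_row_in_row_span_of_rank_eq Mmat_carrier) (simp_all add: Mmat_index)
  moreover have "M (Suc k) $$ (k, c) = g 2 1 i \<omega> * a $ c + g 2 2 i \<omega> * b $ c" if "c < m1 + m2" for c
    using that unfolding M_def a_def b_def i by (simp add: Mmat_index index_append_vec)
  ultimately have "in_row_span k ?R (m1 + m2) (\<lambda>c. g 2 1 i \<omega> * a $ c + g 2 2 i \<omega> * b $ c)"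
    unfolding in_row_span_def by simp
  moreover have "\<not> (in_row_span k ?R (m1 + m2) (\<lambda>c. a $ c) \<and> in_row_span k ?R (m1 + m2) (\<lambda>c. b $ c))"
  proof
    assume "in_row_span k ?R (m1 + m2) (\<lambda>c. a $ c) \<and> in_row_span k ?R (m1 + m2) (\<lambda>c. b $ c)"
    then have "a \<in> crowspan (M k) \<and> b \<in> crowspan (M k)"
      unfolding M_def a_def b_def by (auto intro: crowspan_of_in_row_span[OF Mmat_carrier])
    with not_both show False
      unfolding k_def by simp
  qed
  ultimately have "g 2 2 i \<omega> = 0 \<or> (\<exists>c<m1 + m2. g 2 1 i \<omega> = - g 2 2 i \<omega> *
      gs_residual (m1 + m2) ?R k (\<lambda>c. b $ c) c / gs_residual (m1 + m2) ?R k (\<lambda>c. a $ c) c)"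
    by (rule in_row_span_lincombD)
  then show ?thesis
    unfolding forced_gain_def M_def a_def b_def k_def .
qed

lemma borel_measurable_cnj [measurable]:
  "f \<in> borel_measurable N \<Longrightarrow> (\<lambda>x. cnj (f x)) \<in> borel_measurable N"
  by (rule measurable_compose[OF _ borel_measurable_continuous_onI]) (auto intro: continuous_intros)

lemma borel_measurable_cinner:
  assumes "\<And>c. c < m \<Longrightarrow> (\<lambda>z. u z c) \<in> borel_measurable N"
    and "\<And>c. c < m \<Longrightarrow> (\<lambda>z. w z c) \<in> borel_measurable N"
  shows "(\<lambda>z. cinner m (u z) (w z)) \<in> borel_measurable N"
  unfolding cinner_def using assms
  by (intro borel_measurable_sum borel_measurable_times borel_measurable_cnj) auto

lemma borel_measurable_gs_coeff:
  assumes "\<And>c. c < m \<Longrightarrow> (\<lambda>z. u z c) \<in> borel_measurable N"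
    and "\<And>c. c < m \<Longrightarrow> (\<lambda>z. e z c) \<in> borel_measurable N"
  shows "(\<lambda>z. gs_coeff m (u z) (e z)) \<in> borel_measurable N"
proof -
  have "(\<lambda>z. cinner m (u z) (e z)) \<in> borel_measurable N"
    and ee: "(\<lambda>z. cinner m (e z) (e z)) \<in> borel_measurable N"
    using assms by (simp_all add: borel_measurable_cinner)
  moreover from ee have "{z \<in> space N. cinner m (e z) (e z) = 0} \<in> sets N"
    by measurable
  ultimately show ?thesis
    unfolding gs_coeff_def by (intro measurable_If) auto
qed

lemma borel_measurable_gs_ortho:
  assumes R: "\<And>l c. l < k \<Longrightarrow> c < m \<Longrightarrow> (\<lambda>z. R z l c) \<in> borel_measurable N"
  shows "j < k \<Longrightarrow> c < m \<Longrightarrow> (\<lambda>z. gs_ortho m (R z) j c) \<in> borel_measurable N"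
proof (induction j arbitrary: c rule: less_induct)
  case (less j)
  have "(\<lambda>z. gs_ortho m (R z) j c) =
      (\<lambda>z. R z j c - (\<Sum>i<j. gs_coeff m (R z j) (gs_ortho m (R z) i) * gs_ortho m (R z) i c))"
    by (rule ext) (rule gs_ortho.simps)
  with less R show ?case
    by (auto intro!: borel_measurable_diff borel_measurable_sum borel_measurable_times
        borel_measurable_gs_coeff)
qed

lemma borel_measurable_gs_residual:
  assumes R: "\<And>l c. l < k \<Longrightarrow> c < m \<Longrightarrow> (\<lambda>z. R z l c) \<in> borel_measurable N"
    and u: "\<And>c. c < m \<Longrightarrow> (\<lambda>z. u z c) \<in> borel_measurable N" and "c < m"
  shows "(\<lambda>z. gs_residual m (R z) k (u z) c) \<in> borel_measurable N"
  unfolding gs_residual_def using borel_measurable_gs_ortho[OF R] u \<open>c < m\<close>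
  by (auto intro!: borel_measurable_diff borel_measurable_sum borel_measurable_times
      borel_measurable_gs_coeff)

lemma (in prob_space) indep_atomless_eq_null:
  fixes W X :: "'a \<Rightarrow> complex"
  assumes ind: "indep_var borel W borel X" and atomless: "\<And>c. measure M {\<omega> \<in> space M. X \<omega> = c} = 0"
  shows "{\<omega> \<in> space M. X \<omega> = W \<omega>} \<in> null_sets M"
proof -
  have W: "W \<in> borel_measurable M" and X: "X \<in> borel_measurable M"
    using ind by (blast dest: indep_var_rv1 indep_var_rv2)+
  define D where "D = {p \<in> space (borel \<Otimes>\<^sub>M borel). snd p = (fst p :: complex)}"
  have D: "D \<in> sets (borel \<Otimes>\<^sub>M borel)"
    unfolding D_def by (rule measurable_equality_set) measurable
  have WX: "(\<lambda>x. (W x, X x)) \<in> measurable M (borel \<Otimes>\<^sub>M borel)"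
    using W X by measurable
  interpret PX: prob_space "distr M borel X"
    by (rule prob_space_distr[OF X])
  have "emeasure M {\<omega> \<in> space M. X \<omega> = W \<omega>} =
      emeasure (distr M (borel \<Otimes>\<^sub>M borel) (\<lambda>x. (W x, X x))) D"
    using emeasure_distr[OF WX D] unfolding D_def
    by (simp add: space_pair_measure vimage_def Int_def conj_commute)
  also have "\<dots> = emeasure (distr M borel W \<Otimes>\<^sub>M distr M borel X) D"
    using ind indep_var_distribution_eq by metis
  also have "\<dots> = (\<integral>\<^sup>+w. emeasure (distr M borel X) (Pair w -` D) \<partial>distr M borel W)"
    by (rule PX.emeasure_pair_measure_alt) (use D in simp)
  also have "\<dots> = 0"
  proof -
    have "emeasure (distr M borel X) (Pair w -` D) = 0" for w
    proof -
      have "Pair w -` D = {w}"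
        unfolding D_def by (auto simp: space_pair_measure)
      then have "emeasure (distr M borel X) (Pair w -` D) = emeasure M {\<omega> \<in> space M. X \<omega> = w}"
        using X by (simp add: emeasure_distr vimage_def Int_def conj_commute)
      also have "\<dots> = 0"
        using atomless[of w] X by (simp add: emeasure_eq_measure)
      finally show ?thesis .
    qed
    then show ?thesis by simp
  qed
  finally show ?thesis
    using W X by (simp add: null_sets_def)
qed

lemma (in prob_space) AE_indep_atomless_neq:
  fixes h :: "'b \<Rightarrow> complex"
  assumes "indep_var N Z N' Y" and "\<phi> \<in> borel_measurable N" and "h \<in> borel_measurable N'"
    and "\<And>c. measure M {\<omega> \<in> space M. h (Y \<omega>) = c} = 0"
  shows "AE \<omega> in M. h (Y \<omega>) \<noteq> \<phi> (Z \<omega>)"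
proof -
  have "indep_var borel (\<phi> \<circ> Z) borel (h \<circ> Y)"
    using assms(1-3) by (rule indep_var_compose)
  then have "{\<omega> \<in> space M. h (Y \<omega>) = \<phi> (Z \<omega>)} \<in> null_sets M"
    using indep_atomless_eq_null[of "\<phi> \<circ> Z" "h \<circ> Y"] assms(4) by (simp add: comp_def)
  then show ?thesis
    by (rule AE_I') auto
qed

lemma (in prob_space) AE_atomless_neq:
  fixes X :: "'a \<Rightarrow> complex"
  assumes "X \<in> borel_measurable M" and "measure M {\<omega> \<in> space M. X \<omega> = c} = 0"
  shows "AE \<omega> in M. X \<omega> \<noteq> c"
proof -
  have "{\<omega> \<in> space M. X \<omega> = c} \<in> null_sets M"
    using assms by (simp add: null_sets_def emeasure_eq_measure)
  then show ?thesis
    by (rule AE_I') auto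
qed

definition history :: "(nat \<Rightarrow> nat \<Rightarrow> nat \<Rightarrow> 'w \<Rightarrow> complex) \<Rightarrow> (nat \<times> nat \<times> nat) set \<Rightarrow> 'w \<Rightarrow>
    nat \<times> nat \<times> nat \<Rightarrow> complex" where
  "history g J \<omega> = (\<lambda>x\<in>J. case x of (k, j, s) \<Rightarrow> g k j s \<omega>)"

lemma restrict_history: "J' \<subseteq> J \<Longrightarrow> restrict (history g J \<omega>) J' = history g J' \<omega>"
  unfolding history_def by (auto simp: fun_eq_iff)

text \<open>Everything known when g_21(i) is drawn: all earlier gains and g_22(i).\<close>

definition observed :: "nat \<Rightarrow> (nat \<times> nat \<times> nat) set" where
  "observed i = insert (2, 2, i) (past i)"

lemma past_subset_observed: "t \<le> i \<Longrightarrow> past t \<subseteq> observed i"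
  unfolding past_def observed_def by auto

locale causal_precoding = prob_space M for M :: "'w measure" +
  fixes n m1 m2 :: nat
    and g :: "nat \<Rightarrow> nat \<Rightarrow> nat \<Rightarrow> 'w \<Rightarrow> complex"
    and v1 v2 :: "nat \<Rightarrow> 'w \<Rightarrow> nat \<Rightarrow> complex"
    and F1 F2 :: "nat \<Rightarrow> (nat \<times> nat \<times> nat \<Rightarrow> complex) \<Rightarrow> nat \<Rightarrow> complex"
  assumes indep: "indep_vars (\<lambda>_. borel) (\<lambda>(k, j, t). g k j t) ({1,2} \<times> {1,2} \<times> {1..n})"
    and atomless: "\<And>k j t c. k \<in> {1,2} \<Longrightarrow> j \<in> {1,2} \<Longrightarrow> t \<in> {1..n} \<Longrightarrow>
      measure M {\<omega> \<in> space M. g k j t \<omega> = c} = 0"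
    and F1_measurable: "\<And>t c. t \<in> {1..n} \<Longrightarrow> c < m1 \<Longrightarrow>
      (\<lambda>x. F1 t x c) \<in> borel_measurable (PiM (past t) (\<lambda>_. borel))"
    and F2_measurable: "\<And>t c. t \<in> {1..n} \<Longrightarrow> c < m2 \<Longrightarrow>
      (\<lambda>x. F2 t x c) \<in> borel_measurable (PiM (past t) (\<lambda>_. borel))"
    and v1_eq: "\<And>t \<omega> c. t \<in> {1..n} \<Longrightarrow> \<omega> \<in> space M \<Longrightarrow> c < m1 \<Longrightarrow>
      v1 t \<omega> c = F1 t (history g (past t) \<omega>) c"
    and v2_eq: "\<And>t \<omega> c. t \<in> {1..n} \<Longrightarrow> \<omega> \<in> space M \<Longrightarrow> c < m2 \<Longrightarrow>
      v2 t \<omega> c = F2 t (history g (past t) \<omega>) c"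
begin

definition precoder :: "(nat \<times> nat \<times> nat \<Rightarrow> complex) \<Rightarrow> nat \<Rightarrow> nat \<Rightarrow> complex" where
  "precoder z t c =
     (if c < m1 then F1 t (restrict z (past t)) c else F2 t (restrict z (past t)) (c - m1))"

definition block_rows :: "(nat \<times> nat \<times> nat \<Rightarrow> complex) \<Rightarrow> nat \<Rightarrow> nat \<Rightarrow> complex" where
  "block_rows z l c = (if c < m1 then z (2, 1, l + 1) else z (2, 2, l + 1)) * precoder z (l + 1) c"

definition observed_forced_gain :: "nat \<Rightarrow> nat \<Rightarrow> (nat \<times> nat \<times> nat \<Rightarrow> complex) \<Rightarrow> complex" where
  "observed_forced_gain i c z = - z (2, 2, i) *
     gs_residual (m1 + m2) (block_rows z) (i - 1) (\<lambda>c. if c < m1 then 0 else precoder z i c) c /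
     gs_residual (m1 + m2) (block_rows z) (i - 1) (\<lambda>c. if c < m1 then precoder z i c else 0) c"

lemma precoder_measurable:
  assumes "t \<in> {1..n}" and "past t \<subseteq> J" and "c < m1 + m2"
  shows "(\<lambda>z. precoder z t c) \<in> borel_measurable (PiM J (\<lambda>_. borel))"
proof (cases "c < m1")
  case True
  then show ?thesis
    unfolding precoder_def using assms
    by (simp add: measurable_compose[OF measurable_restrict_subset F1_measurable])
next
  case False
  then show ?thesis
    unfolding precoder_def using assms
    by (simp add: measurable_compose[OF measurable_restrict_subset F2_measurable])
qed

lemma precoder_history:
  "t \<in> {1..n} \<Longrightarrow> past t \<subseteq> J \<Longrightarrow> \<omega> \<in> space M \<Longrightarrow> c < m1 + m2 \<Longrightarrow>
    precoder (history g J \<omega>) t c = (if c < m1 then v1 t \<omega> c else v2 t \<omega> (c - m1))"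
  by (simp add: precoder_def restrict_history v1_eq v2_eq)

lemma observed_forced_gain_measurable:
  assumes i: "i \<in> {1..n}" and "c < m1 + m2"
  shows "observed_forced_gain i c \<in> borel_measurable (PiM (observed i) (\<lambda>_. borel))"
proof -
  have coord: "(\<lambda>z. z x) \<in> borel_measurable (PiM (observed i) (\<lambda>_. borel))" if "x \<in> observed i" for x
    using measurable_component_singleton[OF that] .
  have prec: "(\<lambda>z. precoder z t c') \<in> borel_measurable (PiM (observed i) (\<lambda>_. borel))"
    if "1 \<le> t" "t \<le> i" "c' < m1 + m2" for t c'
    using that i past_subset_observed[of t i] by (intro precoder_measurable) auto
  have rows: "(\<lambda>z. block_rows z l c') \<in> borel_measurable (PiM (observed i) (\<lambda>_. borel))"
    if "l < i - 1" "c' < m1 + m2" for l c'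
  proof -
    have "(2, 1, l + 1) \<in> observed i" "(2, 2, l + 1) \<in> observed i"
      using that unfolding observed_def past_def by auto
    then show ?thesis
      unfolding block_rows_def using that
      by (cases "c' < m1") (simp_all add: borel_measurable_times coord prec)
  qed
  have new_rows:
    "(\<lambda>z. if c' < m1 then 0 else precoder z i c') \<in> borel_measurable (PiM (observed i) (\<lambda>_. borel))"
    "(\<lambda>z. if c' < m1 then precoder z i c' else 0) \<in> borel_measurable (PiM (observed i) (\<lambda>_. borel))"
    if "c' < m1 + m2" for c'
    using that i prec[of i c'] by (cases "c' < m1"; simp)+
  have "(2, 2, i) \<in> observed i"
    unfolding observed_def by simp
  then show ?thesis
    unfolding observed_forced_gain_def using assms(2)
    by (intro borel_measurable_divide borel_measurable_times borel_measurable_uminus coord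
        borel_measurable_gs_residual rows new_rows)
qed

lemma observed_forced_gain_history:
  assumes "i \<in> {1..n}" and "\<omega> \<in> space M" and "c < m1 + m2"
  shows "observed_forced_gain i c (history g (observed i) \<omega>) = forced_gain g v1 v2 m1 m2 i \<omega> c"
proof -
  let ?z = "history g (observed i) \<omega>"
  have rows: "block_rows ?z l c' = Mmat g v1 v2 m1 m2 (i - 1) \<omega> $$ (l, c')"
    if "l < i - 1" "c' < m1 + m2" for l c'
  proof -
    have "(2, 1, l + 1) \<in> observed i" "(2, 2, l + 1) \<in> observed i"
      using that unfolding observed_def past_def by auto
    then have "?z (2, 1, l + 1) = g 2 1 (l + 1) \<omega>" "?z (2, 2, l + 1) = g 2 2 (l + 1) \<omega>"
      unfolding history_def by simp_all
    moreover have
      "precoder ?z (l + 1) c' = (if c' < m1 then v1 (l + 1) \<omega> c' else v2 (l + 1) \<omega> (c' - m1))"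
      using that assms past_subset_observed[of "l + 1" i] by (intro precoder_history) auto
    ultimately show ?thesis
      using that by (simp add: block_rows_def Mmat_index)
  qed
  have "?z (2, 2, i) = g 2 2 i \<omega>"
    unfolding history_def observed_def by simp
  moreover have "precoder ?z i c' = (if c' < m1 then v1 i \<omega> c' else v2 i \<omega> (c' - m1))"
    if "c' < m1 + m2" for c'
    using assms that past_subset_observed[of i i] by (simp add: precoder_history)
  ultimately show ?thesis
    unfolding observed_forced_gain_def forced_gain_def using assms(3) rows
    by (intro arg_cong2[where f = "(/)"] arg_cong2[where f = "(*)"] refl gs_residual_cong)
      (auto simp: index_append_vec)
qed

lemma g_measurable: "k \<in> {1,2} \<Longrightarrow> j \<in> {1,2} \<Longrightarrow> t \<in> {1..n} \<Longrightarrow> g k j t \<in> borel_measurable M"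
  using indep unfolding indep_vars_def by fastforce

lemma indep_history_gain:
  assumes "i \<in> {1..n}"
  shows "indep_var (PiM (observed i) (\<lambda>_. borel)) (history g (observed i))
    (PiM {(2, 1, i)} (\<lambda>_. borel)) (history g {(2, 1, i)})"
proof -
  have history_eq: "history g J = (\<lambda>\<omega>. restrict (\<lambda>x. (\<lambda>(k, j, t). g k j t) x \<omega>) J)" for J
    unfolding history_def by (auto simp: fun_eq_iff split: prod.splits)
  show ?thesis
    unfolding history_eq using assms
    by (intro indep_var_restrict[OF indep]) (auto simp: observed_def past_def)
qed

lemma AE_rank_eq_imp_in_crowspan:
  assumes i: "i \<in> {1..n}"
  shows "AE \<omega> in M. crank (Mmat g v1 v2 m1 m2 i \<omega>) = crank (Mmat g v1 v2 m1 m2 (i - 1) \<omega>) \<longrightarrow>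
    (Matrix.vec m1 (v1 i \<omega>) @\<^sub>v 0\<^sub>v m2 \<in> crowspan (Mmat g v1 v2 m1 m2 (i - 1) \<omega>) \<and>
     0\<^sub>v m1 @\<^sub>v Matrix.vec m2 (v2 i \<omega>) \<in> crowspan (Mmat g v1 v2 m1 m2 (i - 1) \<omega>))"
proof -
  have gain: "history g {(2, 1, i)} \<omega> (2, 1, i) = g 2 1 i \<omega>" for \<omega>
    by (simp add: history_def)
  have "AE \<omega> in M. g 2 2 i \<omega> \<noteq> 0"
    using i by (intro AE_atomless_neq g_measurable atomless) auto
  moreover have "AE \<omega> in M. \<forall>c\<in>{..<m1 + m2}.
      g 2 1 i \<omega> \<noteq> observed_forced_gain i c (history g (observed i) \<omega>)"
    using AE_indep_atomless_neq[OF indep_history_gain[OF i] observed_forced_gain_measurable[OF i]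
        measurable_component_singleton[of "(2, 1, i)"]] i atomless[of 2 1 i]
    unfolding gain by (intro AE_finite_allI) auto
  moreover have "AE \<omega> in M. \<omega> \<in> space M"
    by simp
  ultimately show ?thesis
  proof eventually_elim
    case (elim \<omega>)
    then have "\<forall>c<m1 + m2. g 2 1 i \<omega> \<noteq> forced_gain g v1 v2 m1 m2 i \<omega> c"
      using observed_forced_gain_history[OF i] by simp
    then show ?case
      using Mmat_rank_eq_cases[of i g v1 v2 m1 m2 \<omega>] elim(1) i by auto
  qed
qed

end

theorem lemma6:
  fixes M :: "'w measure"
    and n m1 m2 :: nat
    and g :: "nat \<Rightarrow> nat \<Rightarrow> nat \<Rightarrow> 'w \<Rightarrow> complex"
    and v1 v2 :: "nat \<Rightarrow> 'w \<Rightarrow> nat \<Rightarrow> complex"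
  assumes "prob_space M"
    and "0 < m1" and "0 < m2"
    and indep: "prob_space.indep_vars M (\<lambda>_. borel) (\<lambda>(k, j, t). g k j t) ({1,2} \<times> {1,2} \<times> {1..n})"
    and ident: "\<forall>k\<in>{1,2}. \<forall>j\<in>{1,2}. \<forall>t\<in>{1..n}. distr M borel (g k j t) = distr M borel (g 1 1 1)"
    and cont: "\<forall>k\<in>{1,2}. \<forall>j\<in>{1,2}. \<forall>t\<in>{1..n}. \<forall>c::complex.
                 measure M {\<omega> \<in> space M. g k j t \<omega> = c} = 0"
    and det1: "\<forall>t\<in>{1..n}. \<exists>F :: (nat \<times> nat \<times> nat \<Rightarrow> complex) \<Rightarrow> nat \<Rightarrow> complex.
                 (\<forall>c<m1. (\<lambda>x. F x c) \<in> borel_measurable (PiM (past t) (\<lambda>_. borel))) \<and>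
                 (\<forall>\<omega>\<in>space M. \<forall>c<m1. v1 t \<omega> c = F (\<lambda>x\<in>past t. case x of (k, j, s) \<Rightarrow> g k j s \<omega>) c)"
    and det2: "\<forall>t\<in>{1..n}. \<exists>F :: (nat \<times> nat \<times> nat \<Rightarrow> complex) \<Rightarrow> nat \<Rightarrow> complex.
                 (\<forall>c<m2. (\<lambda>x. F x c) \<in> borel_measurable (PiM (past t) (\<lambda>_. borel))) \<and>
                 (\<forall>\<omega>\<in>space M. \<forall>c<m2. v2 t \<omega> c = F (\<lambda>x\<in>past t. case x of (k, j, s) \<Rightarrow> g k j s \<omega>) c)"
  shows "AE \<omega> in M. \<forall>i\<in>{1..n}.
           crank (Mmat g v1 v2 m1 m2 i \<omega>) = crank (Mmat g v1 v2 m1 m2 (i - 1) \<omega>) \<longrightarrow>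
             (Matrix.vec m1 (v1 i \<omega>) @\<^sub>v 0\<^sub>v m2 \<in> crowspan (Mmat g v1 v2 m1 m2 (i - 1) \<omega>) \<and>
              0\<^sub>v m1 @\<^sub>v Matrix.vec m2 (v2 i \<omega>) \<in> crowspan (Mmat g v1 v2 m1 m2 (i - 1) \<omega>))"
proof -
  obtain F1 where F1: "\<forall>t\<in>{1..n}. (\<forall>c<m1. (\<lambda>x. F1 t x c) \<in> borel_measurable (PiM (past t) (\<lambda>_. borel))) \<and>
      (\<forall>\<omega>\<in>space M. \<forall>c<m1. v1 t \<omega> c = F1 t (\<lambda>x\<in>past t. case x of (k, j, s) \<Rightarrow> g k j s \<omega>) c)"
    using bchoice[OF det1] by blast
  obtain F2 where F2: "\<forall>t\<in>{1..n}. (\<forall>c<m2. (\<lambda>x. F2 t x c) \<in> borel_measurable (PiM (past t) (\<lambda>_. borel))) \<and>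
      (\<forall>\<omega>\<in>space M. \<forall>c<m2. v2 t \<omega> c = F2 t (\<lambda>x\<in>past t. case x of (k, j, s) \<Rightarrow> g k j s \<omega>) c)"
    using bchoice[OF det2] by blast
  interpret prob_space M by fact
  interpret causal_precoding M n m1 m2 g v1 v2 F1 F2
  proof (unfold_locales, unfold history_def)
    fix k j t :: nat and c
    assume "k \<in> {1, 2}" "j \<in> {1, 2}" "t \<in> {1..n}"
    then show "measure M {\<omega> \<in> space M. g k j t \<omega> = c} = 0"
      using cont by blast
  qed (use indep F1 F2 in simp_all)
  show ?thesis
    by (intro AE_finite_allI AE_rank_eq_imp_in_crowspan) simp_all
qed

end
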